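(* Let $\mathcal{T}$ be a tiling of $\mathbb{R}^d$ with finite local complexity, and let $f:X_{\mathcal{T}}\to\mathbb{T}$ be a continuous eigenfunction. Then for every $\varepsilon>0$ there is $R>0$ such that whenever $\mathcal{S}_1,\mathcal{S}_2\in X_{\mathcal{T}}$, $x\in\mathbb{R}^d$ and $\mathcal{S}_1\wedge B(x,R)=\mathcal{S}_2\wedge B(x,R)$, we have $|f(\mathcal{S}_1)-f(\mathcal{S}_2)|<\varepsilon$. Consequently, given $f$ and $\varepsilon>0$, if $R>0$ is large enough and a patch $\mathcal{P}$ has support containing a ball of radius $R$, then the diameter of $f(A_{\mathcal{P}})$ is less than $\varepsilon$, where $A_{\mathcal{P}}=\{\mathcal{S}\in X_{\mathcal{T}}:\mathcal{P}\subset\mathcal{S}\}$.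
   Context: A tile in $\mathbb{R}^d$ is a compact set equal to the closure of its interior, possibly labeled from a finite set. Patches: sets of tiles with pairwise disjoint interiors; tilings: patches whose support (closure of union of supports) is $\mathbb{R}^d$. For a patch $\mathcal{P}$ and $S\subset\mathbb{R}^d$: $\mathcal{P}\sqcap S=\{T\in\mathcal{P}:\operatorname{supp}T\cap S\neq\emptyset\}$ and $\mathcal{P}\wedge S=\{T\in\mathcal{P}:\operatorname{supp}T\subset S\}$. $B(x,R)$ is the closed ball; $B_r=B(0,r)$; $\mathbb{T}=\{z\in\mathbb{C}:|z|=1\}$. Finite local complexity: for each compact $K$, $\{\mathcal{T}\sqcap(K+x)\}_x$ is finite up to translation. The hull $X_{\mathcal{T}}$ is the closure of $\{\mathcal{T}+x\}$ under the metric $\rho(\mathcal{P}_1,\mathcal{P}_2)=\inf$ of $\varepsilon\in(0,1/\sqrt2)$ such that there are $\|x_i\|\le\varepsilon$ with $(\mathcal{P}_1+x_1)\sqcap B_{1/\varepsilon}=(\mathcal{P}_2+x_2)\sqcap B_{1/\varepsilon}$ (or $1/\sqrt2$ if none). A continuous eigenfunction (with eigenvalue $a\in\mathbb{R}^d$) is a continuous map $f:X_{\mathcal{T}}\to\mathbb{T}$ with $f(\mathcal{S}-x)=e^{2\pi i\langle x,a\rangle}f(\mathcal{S})$ for all $\mathcal{S}\in X_{\mathcal{T}}$ and $x\in\mathbb{R}^d$. *)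

theory Defs
  imports "HOL-Analysis.Analysis"
begin

type_synonym ('a, 'l) tile = "'a set \<times> 'l"

definition is_tile :: "('a::euclidean_space, 'l) tile \<Rightarrow> bool" where
  "is_tile T \<longleftrightarrow> compact (fst T) \<and> fst T = closure (interior (fst T))"

definition tile_transl :: "('a::euclidean_space, 'l) tile \<Rightarrow> 'a \<Rightarrow> ('a, 'l) tile" where
  "tile_transl T x = ((\<lambda>y. y + x) ` fst T, snd T)"

definition patch_transl :: "('a::euclidean_space, 'l) tile set \<Rightarrow> 'a \<Rightarrow> ('a, 'l) tile set" where
  "patch_transl P x = (\<lambda>T. tile_transl T x) ` P"

definition is_patch :: "('a::euclidean_space, 'l) tile set \<Rightarrow> bool" where
  "is_patch P \<longleftrightarrow> (\<forall>T\<in>P. is_tile T) \<and>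
     (\<forall>T\<in>P. \<forall>T'\<in>P. T \<noteq> T' \<longrightarrow> interior (fst T) \<inter> interior (fst T') = {})"

definition patch_supp :: "('a::euclidean_space, 'l) tile set \<Rightarrow> 'a set" where
  "patch_supp P = closure (\<Union>T\<in>P. fst T)"

definition is_tiling :: "('a::euclidean_space, 'l) tile set \<Rightarrow> bool" where
  "is_tiling P \<longleftrightarrow> is_patch P \<and> patch_supp P = UNIV"

text \<open>P \<sqinter> S: tiles meeting S;  P \<and> S: tiles contained in S.\<close>
definition meet :: "('a::euclidean_space, 'l) tile set \<Rightarrow> 'a set \<Rightarrow> ('a, 'l) tile set" where
  "meet P S = {T\<in>P. fst T \<inter> S \<noteq> {}}"

definition inside :: "('a::euclidean_space, 'l) tile set \<Rightarrow> 'a set \<Rightarrow> ('a, 'l) tile set" where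
  "inside P S = {T\<in>P. fst T \<subseteq> S}"

definition FLC :: "('a::euclidean_space, 'l) tile set \<Rightarrow> bool" where
  "FLC \<T> \<longleftrightarrow> (\<forall>K. compact K \<longrightarrow>
     (\<exists>F. finite F \<and> (\<forall>x. \<exists>Q\<in>F. \<exists>y. meet \<T> ((\<lambda>z. z + x) ` K) = patch_transl Q y)))"

definition rho :: "('a::euclidean_space, 'l) tile set \<Rightarrow> ('a, 'l) tile set \<Rightarrow> real" where
  "rho P1 P2 = Inf ({e. 0 < e \<and> e < 1 / sqrt 2 \<and>
      (\<exists>x1 x2. norm x1 \<le> e \<and> norm x2 \<le> e \<and>
         meet (patch_transl P1 x1) (cball 0 (1/e)) = meet (patch_transl P2 x2) (cball 0 (1/e)))}
      \<union> {1 / sqrt 2})"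

definition hull_X :: "('a::euclidean_space, 'l) tile set \<Rightarrow> ('a, 'l) tile set set" where
  "hull_X \<T> = {S. \<forall>e>0. \<exists>x. rho S (patch_transl \<T> x) < e}"

definition cont_eigenfunction ::
  "('a::euclidean_space, 'l) tile set \<Rightarrow> (('a, 'l) tile set \<Rightarrow> complex) \<Rightarrow> 'a \<Rightarrow> bool" where
  "cont_eigenfunction \<T> f a \<longleftrightarrow>
     (\<forall>S\<in>hull_X \<T>. norm (f S) = 1) \<and>
     (\<forall>S\<in>hull_X \<T>. \<forall>e>0. \<exists>d>0. \<forall>S'\<in>hull_X \<T>. rho S' S < d \<longrightarrow> dist (f S') (f S) < e) \<and>
     (\<forall>S\<in>hull_X \<T>. \<forall>x. f (patch_transl S (- x)) = exp (2 * pi * \<i> * complex_of_real (x \<bullet> a)) * f S)"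

definition A_patch :: "('a::euclidean_space, 'l) tile set \<Rightarrow> ('a, 'l) tile set \<Rightarrow> ('a, 'l) tile set set" where
  "A_patch \<T> P = {S\<in>hull_X \<T>. P \<subseteq> S}"

end

(* The hull is sequentially compact along translates of T: recentring a translate so that one
   of finitely many prototiles sits at its original place, finite local complexity leaves only
   finitely many patterns within each radius, and a diagonal argument produces a cluster point.
   Hence the continuous eigenfunction f is uniformly continuous along the orbit: if T + u and
   T + v agree on a large ball, then the quotient f (T + v) / f (T + u), a pure phase depending
   only on v - u, is close to 1.  Every S in the hull agrees on a given ball with a translate
   T + u for which f S is close to f (T + u), and tiles have uniformly bounded diameter, so two
   elements of the hull with the same nonempty tiles inside a large ball have close values of f.
   The second claim follows because every element of A_P has the same tiles as P inside a ball
   covered by P. *)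

theory Submission
  imports Defs
begin

section \<open>Translating tiles and patches\<close>

lemma fst_tile_transl: "fst (tile_transl t v) = (+) v ` fst t"
  unfolding tile_transl_def by (auto simp: add.commute)

lemma tile_transl_add: "tile_transl (tile_transl t u) v = tile_transl t (u + v)"
  unfolding tile_transl_def by (auto simp: image_image add.assoc)

lemma tile_transl_0 [simp]: "tile_transl t 0 = t"
  unfolding tile_transl_def by (cases t) auto

lemma patch_transl_add [simp]: "patch_transl (patch_transl P u) v = patch_transl P (u + v)"
  unfolding patch_transl_def by (auto simp: image_image tile_transl_add)

lemma patch_transl_0 [simp]: "patch_transl P 0 = P"
  unfolding patch_transl_def by simp

lemma patch_transl_eq_iff [simp]: "patch_transl P v = patch_transl Q v \<longleftrightarrow> P = Q"
  by (metis add.right_inverse patch_transl_0 patch_transl_add)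

lemma mem_patch_transl: "t \<in> patch_transl P v \<longleftrightarrow> tile_transl t (- v) \<in> P"
proof
  assume "t \<in> patch_transl P v"
  then show "tile_transl t (- v) \<in> P"
    unfolding patch_transl_def by (auto simp: tile_transl_add)
next
  assume "tile_transl t (- v) \<in> P"
  moreover have "t = tile_transl (tile_transl t (- v)) v"
    by (simp add: tile_transl_add)
  ultimately show "t \<in> patch_transl P v"
    unfolding patch_transl_def by blast
qed

lemma image_add_right_cball: "(\<lambda>z. z + x) ` cball 0 r = cball x r"
  for x :: "'a::real_normed_vector"
  using cball_translation[of x 0 r] by (simp add: add.commute)

lemma meet_patch_transl:
  "meet (patch_transl P v) (cball c r) = patch_transl (meet P (cball (c - v) r)) v"
proof -
  have hits: "fst (tile_transl t (- v)) \<inter> cball (c - v) r \<noteq> {} \<longleftrightarrow> fst t \<inter> cball c r \<noteq> {}" for t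
  proof -
    have "fst (tile_transl t (- v)) \<inter> cball (c - v) r = (\<lambda>x. x - v) ` (fst t \<inter> cball c r)"
      by (simp add: fst_tile_transl translation_subtract_Int cball_translation_subtract)
    then show ?thesis by simp
  qed
  show ?thesis
    by (rule set_eqI) (simp add: meet_def mem_patch_transl hits)
qed

lemma meet_patch_transl_eq_iff:
  "meet (patch_transl P v) (cball c r) = meet (patch_transl Q v) (cball c r) \<longleftrightarrow>
    meet P (cball (c - v) r) = meet Q (cball (c - v) r)"
  by (simp add: meet_patch_transl)

lemma meet_subset: "meet P S \<subseteq> P"
  unfolding meet_def by auto

lemma meet_meet: "S \<subseteq> S' \<Longrightarrow> meet (meet P S') S = meet P S"
  unfolding meet_def by auto

lemma meet_eq_subset: "meet P S' = meet Q S' \<Longrightarrow> S \<subseteq> S' \<Longrightarrow> meet P S = meet Q S"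
  by (metis meet_meet)

lemma is_tile_tile_transl: "is_tile t \<Longrightarrow> is_tile (tile_transl t v)"
  unfolding is_tile_def fst_tile_transl
  by (simp add: compact_translation interior_translation closure_translation)

lemma interior_tile_transl: "interior (fst (tile_transl t v)) = (+) v ` interior (fst t)"
  by (simp add: fst_tile_transl interior_translation)

lemma tile_interior_nonempty: "is_tile t \<Longrightarrow> fst t \<noteq> {} \<Longrightarrow> interior (fst t) \<noteq> {}"
  unfolding is_tile_def by (metis closure_empty)

lemma is_patch_patch_transl:
  assumes "is_patch P" shows "is_patch (patch_transl P v)"
  unfolding is_patch_def
proof (intro conjI ballI impI)
  fix t assume "t \<in> patch_transl P v"
  then show "is_tile t"
    using assms is_tile_tile_transl unfolding is_patch_def patch_transl_def by blast
next
  fix t t' assume "t \<in> patch_transl P v" "t' \<in> patch_transl P v" "t \<noteq> t'"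
  then obtain s s' where "s \<in> P" "s' \<in> P" "s \<noteq> s'" "t = tile_transl s v" "t' = tile_transl s' v"
    unfolding patch_transl_def by auto
  with assms show "interior (fst t) \<inter> interior (fst t') = {}"
    unfolding is_patch_def by (simp add: interior_tile_transl flip: translation_Int)
qed

lemma patch_tiles_eq:
  assumes "is_patch P" "t \<in> P" "t' \<in> P" "p \<in> interior (fst t)" "p \<in> fst t'"
  shows "t = t'"
proof (rule ccontr)
  assume "t \<noteq> t'"
  with assms have "interior (fst t) \<inter> interior (fst t') = {}"
    unfolding is_patch_def by blast
  then have "interior (fst t) \<inter> closure (interior (fst t')) = {}"
    by (simp add: open_Int_closure_eq_empty)
  moreover have "fst t' = closure (interior (fst t'))"
    using assms(1,3) unfolding is_patch_def is_tile_def by blast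
  ultimately show False
    using assms(4,5) by blast
qed

lemma meet_interior_point:
  assumes "is_patch P" "t \<in> P" "p \<in> interior (fst t)"
  shows "meet P {p} = {t}"
proof (rule set_eqI)
  fix t'
  have "t' \<in> P \<Longrightarrow> p \<in> fst t' \<Longrightarrow> t' = t"
    using patch_tiles_eq[OF assms(1,2) _ assms(3)] by blast
  then show "t' \<in> meet P {p} \<longleftrightarrow> t' \<in> {t}"
    using assms interior_subset unfolding meet_def by auto
qed

lemma tile_transl_eq_self_imp_0:
  assumes "compact (fst s)" "fst s \<noteq> {}" "tile_transl s v = s"
  shows "v = 0"
proof -
  have "continuous_on (fst s) (\<lambda>z. z \<bullet> v)"
    by (intro continuous_intros)
  then obtain p where p: "p \<in> fst s" "\<forall>q\<in>fst s. q \<bullet> v \<le> p \<bullet> v"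
    using continuous_attains_sup[OF assms(1,2)] by blast
  have "v + p \<in> fst s"
    using p(1) assms(3) fst_tile_transl[of s v] by auto
  then have "(v + p) \<bullet> v \<le> p \<bullet> v"
    using p(2) by blast
  then have "v \<bullet> v \<le> 0"
    by (simp add: inner_add_left)
  then show "v = 0"
    by (metis inner_gt_zero_iff not_le)
qed

lemma translates_in_patch_separated:
  assumes "is_patch P" "s \<in> P" "tile_transl s v \<in> P" "v \<noteq> 0" "ball c \<rho> \<subseteq> interior (fst s)"
  shows "\<rho> \<le> norm v"
proof (rule ccontr)
  assume "\<not> \<rho> \<le> norm v"
  then have "norm v < \<rho>" "0 < \<rho>"
    using norm_ge_zero[of v] by linarith+
  then have "c \<in> ball c \<rho>" "c - v \<in> ball c \<rho>"
    by (auto simp: dist_norm)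
  then have "c \<in> interior (fst s)" "c - v \<in> interior (fst s)"
    using assms(5) by auto
  then have "c \<in> interior (fst (tile_transl s v))"
    by (force simp: interior_tile_transl)
  then have "tile_transl s v = s"
    using patch_tiles_eq[OF assms(1,3,2)] \<open>c \<in> interior (fst s)\<close> interior_subset by blast
  moreover have "compact (fst s)" "fst s \<noteq> {}"
    using assms(1,2) \<open>c \<in> interior (fst s)\<close> interior_subset unfolding is_patch_def is_tile_def
    by auto
  ultimately show False
    using tile_transl_eq_self_imp_0 assms(4) by blast
qed

lemma tile_transl_in_same_pattern:
  assumes "s \<in> meet P' B" "meet P' B = patch_transl Q t'" "meet P B = patch_transl Q t"
  shows "tile_transl s (t - t') \<in> meet P B"
proof -
  have "tile_transl (tile_transl s (- t')) t \<in> patch_transl Q t"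
    using assms(1,2) by (simp add: mem_patch_transl tile_transl_add)
  then show ?thesis
    using assms(3) by (simp add: tile_transl_add)
qed

text \<open>Two offsets of a pinned tile put two translates of it into one patch, so distinct offsets
  are at least the radius of a ball inside the tile apart.\<close>

lemma finite_offsets_of_pinned_tile:
  assumes "is_tile s" "fst s \<noteq> {}"
    and pinned: "\<And>t t'. t \<in> G \<Longrightarrow> t' \<in> G \<Longrightarrow>
      \<exists>P. is_patch P \<and> s \<in> P \<and> tile_transl s (t - t') \<in> meet P (cball 0 r)"
  shows "finite G"
proof -
  obtain c \<rho> where "0 < \<rho>" "ball c \<rho> \<subseteq> interior (fst s)"
    using tile_interior_nonempty[OF assms(1,2)] open_contains_ball[of "interior (fst s)"] by blast
  have "bounded (fst s)"
    using assms(1) unfolding is_tile_def by (simp add: compact_imp_bounded)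
  then obtain B where B: "\<And>q. q \<in> fst s \<Longrightarrow> norm q \<le> B"
    unfolding bounded_iff by blast
  have near: "G \<subseteq> cball t0 (r + B)" if "t0 \<in> G" for t0
  proof
    fix t assume "t \<in> G"
    then obtain P where "tile_transl s (t - t0) \<in> meet P (cball 0 r)"
      using pinned \<open>t0 \<in> G\<close> by blast
    then obtain q where "q \<in> fst s" "norm (t - t0 + q) \<le> r"
      unfolding meet_def by (auto simp: fst_tile_transl)
    moreover have "norm (t - t0) \<le> norm (t - t0 + q) + norm q"
      using norm_triangle_ineq4[of "t - t0 + q" q] by simp
    ultimately show "t \<in> cball t0 (r + B)"
      using B[of q] by (simp add: dist_norm norm_minus_commute)
  qed
  have "uniform_discrete G"
    unfolding uniform_discrete_def
  proof (intro exI conjI ballI impI)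
    fix t t' assume "t \<in> G" "t' \<in> G" "dist t t' < \<rho>"
    then obtain P where P: "is_patch P" "s \<in> P" "tile_transl s (t - t') \<in> P"
      using pinned meet_subset by blast
    show "t = t'"
    proof (rule ccontr)
      assume "t \<noteq> t'"
      then have "\<rho> \<le> norm (t - t')"
        using translates_in_patch_separated[OF P] \<open>ball c \<rho> \<subseteq> interior (fst s)\<close> by simp
      with \<open>dist t t' < \<rho>\<close> show False
        by (simp add: dist_norm)
    qed
  qed fact
  moreover have "bounded G"
  proof (cases "G = {}")
    case False
    then obtain t0 where "t0 \<in> G"
      by blast
    then show ?thesis
      using bounded_subset[OF bounded_cball near] by blast
  qed simp
  ultimately show ?thesis
    using uniform_discrete_finite_iff by blast
qed

section \<open>Comparing patches on balls\<close>

text \<open>The empty set is a tile in the sense of \<open>is_tile\<close>, and an empty tile lies inside every set,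
  so comparisons of the tiles inside a ball ignore empty tiles.\<close>

definition inside_nonempty ::
    "('a::euclidean_space, 'l) tile set \<Rightarrow> 'a set \<Rightarrow> ('a, 'l) tile set" where
  "inside_nonempty P S = {t\<in>P. fst t \<noteq> {} \<and> fst t \<subseteq> S}"

lemma inside_nonempty_eq_if_inside_eq:
  "inside P S = inside Q S \<Longrightarrow> inside_nonempty P S = inside_nonempty Q S"
  unfolding inside_def inside_nonempty_def by blast

lemma inside_nonempty_eq_subset:
  assumes "inside_nonempty P S' = inside_nonempty Q S'" "S \<subseteq> S'"
  shows "inside_nonempty P S = inside_nonempty Q S"
  using assms unfolding inside_nonempty_def by blast

lemma inside_nonempty_eq_if_meet_eq:
  assumes "meet P S = meet Q S"
  shows "inside_nonempty P S = inside_nonempty Q S"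
  using assms unfolding inside_nonempty_def meet_def by blast

lemma inside_nonempty_subpatch:
  assumes "is_patch S" "P \<subseteq> S" "cball x R \<subseteq> patch_supp P"
  shows "inside_nonempty S (cball x R) = inside_nonempty P (cball x R)"
proof
  show "inside_nonempty P (cball x R) \<subseteq> inside_nonempty S (cball x R)"
    using assms(2) unfolding inside_nonempty_def by blast
next
  show "inside_nonempty S (cball x R) \<subseteq> inside_nonempty P (cball x R)"
  proof
    fix t assume t: "t \<in> inside_nonempty S (cball x R)"
    then have "t \<in> S" "is_tile t" "fst t \<noteq> {}" "fst t \<subseteq> cball x R"
      using assms(1) unfolding inside_nonempty_def is_patch_def by auto
    then obtain q where q: "q \<in> interior (fst t)"
      using tile_interior_nonempty by blast
    have "interior (fst t) \<subseteq> ball x R"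
      using interior_mono[OF \<open>fst t \<subseteq> cball x R\<close>] by simp
    then have "q \<in> closure (\<Union>t'\<in>P. fst t')"
      using q assms(3) ball_subset_cball unfolding patch_supp_def by blast
    then obtain t' z where "t' \<in> P" "z \<in> fst t'" "z \<in> interior (fst t)"
      using open_Int_closure_eq_empty[OF open_interior, of "fst t" "\<Union>t'\<in>P. fst t'"] q by blast
    then have "t = t'"
      using patch_tiles_eq[OF assms(1) \<open>t \<in> S\<close>] assms(2) by blast
    with t \<open>t' \<in> P\<close> show "t \<in> inside_nonempty P (cball x R)"
      unfolding inside_nonempty_def by blast
  qed
qed

definition tiles_diam_le :: "('a::euclidean_space, 'l) tile set \<Rightarrow> real \<Rightarrow> bool" where
  "tiles_diam_le P D \<longleftrightarrow> (\<forall>t\<in>P. \<forall>p\<in>fst t. \<forall>q\<in>fst t. dist p q \<le> D)"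

lemma tiles_diam_le_patch_transl:
  assumes "tiles_diam_le P D" shows "tiles_diam_le (patch_transl P v) D"
  using assms unfolding tiles_diam_le_def patch_transl_def
  by (auto simp: fst_tile_transl)

lemma meet_cball_tile_subset:
  assumes "tiles_diam_le P D" "t \<in> meet P (cball c r)"
  shows "fst t \<subseteq> cball c (r + D)"
proof
  fix q assume "q \<in> fst t"
  obtain p where "p \<in> fst t" "dist c p \<le> r"
    using assms(2) unfolding meet_def by auto
  moreover from assms \<open>q \<in> fst t\<close> \<open>p \<in> fst t\<close> have "dist p q \<le> D"
    unfolding tiles_diam_le_def meet_def by blast
  ultimately show "q \<in> cball c (r + D)"
    using dist_triangle[of c q p] by simp
qed

lemma meet_eq_if_inside_nonempty_eq:
  assumes "tiles_diam_le P D" "tiles_diam_le Q D"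
    "inside_nonempty P (cball c (r + D)) = inside_nonempty Q (cball c (r + D))"
  shows "meet P (cball c r) = meet Q (cball c r)"
proof -
  have "t \<in> inside_nonempty P' (cball c (r + D))"
    if "tiles_diam_le P' D" "t \<in> meet P' (cball c r)" for P' t
    using that meet_cball_tile_subset[OF that] unfolding meet_def inside_nonempty_def by auto
  with assms show ?thesis
    unfolding meet_def inside_nonempty_def by blast
qed

lemma meet_Union_nested:
  assumes "\<And>m m'. m \<le> m' \<Longrightarrow> P m = meet (P m') (cball c (real m))"
  shows "meet (\<Union>m. P m) (cball c (real m)) = P m"
proof
  show "meet (\<Union>m. P m) (cball c (real m)) \<subseteq> P m"
  proof
    fix t assume "t \<in> meet (\<Union>m. P m) (cball c (real m))"
    then obtain k where "t \<in> P k" "fst t \<inter> cball c (real m) \<noteq> {}"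
      unfolding meet_def by blast
    show "t \<in> P m"
    proof (cases "m \<le> k")
      case True
      with \<open>t \<in> P k\<close> \<open>fst t \<inter> cball c (real m) \<noteq> {}\<close> show ?thesis
        unfolding assms[OF True] meet_def by blast
    next
      case False
      then have "P k = meet (P m) (cball c (real k))"
        by (intro assms) simp
      with \<open>t \<in> P k\<close> show ?thesis
        using meet_subset by blast
    qed
  qed
  have "P m = meet (P m) (cball c (real m))"
    using assms by blast
  then show "P m \<subseteq> meet (\<Union>m. P m) (cball c (real m))"
    unfolding meet_def by blast
qed

section \<open>The tiling metric and the hull\<close>

lemma rho_le:
  assumes "0 < e" "e < 1 / sqrt 2" "norm x1 \<le> e" "norm x2 \<le> e"
    "meet (patch_transl P1 x1) (cball 0 (1/e)) = meet (patch_transl P2 x2) (cball 0 (1/e))"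
  shows "rho P1 P2 \<le> e"
  unfolding rho_def using assms by (intro cInf_lower) (auto intro!: bdd_belowI[of _ 0])

lemma rho_sym: "rho P1 P2 = rho P2 P1"
  unfolding rho_def by (rule arg_cong[where f = Inf]) (auto 0 4)

lemma rho_less_imp_witness:
  assumes "rho P1 P2 < e" "e \<le> 1 / sqrt 2"
  obtains e' x1 x2 where "0 < e'" "e' < e" "norm x1 \<le> e'" "norm x2 \<le> e'"
    "meet (patch_transl P1 x1) (cball 0 (1/e')) = meet (patch_transl P2 x2) (cball 0 (1/e'))"
proof -
  from assms(1) obtain e' where "e' < e" "e' \<in> {e. 0 < e \<and> e < 1 / sqrt 2 \<and>
      (\<exists>x1 x2. norm x1 \<le> e \<and> norm x2 \<le> e \<and>
         meet (patch_transl P1 x1) (cball 0 (1/e)) = meet (patch_transl P2 x2) (cball 0 (1/e)))}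
      \<union> {1 / sqrt 2}"
    unfolding rho_def by (subst (asm) cInf_less_iff) (auto intro!: bdd_belowI[of _ 0])
  with assms(2) that show ?thesis
    by auto
qed

lemma rho_less_if_agree:
  assumes "0 < d"
  obtains r where "\<And>P1 P2. meet P1 (cball 0 r) = meet P2 (cball 0 r) \<Longrightarrow> rho P1 P2 < d"
proof
  define r where "r = max 2 (2 / d)"
  have "sqrt 2 < 2"
    by (rule real_less_lsqrt) auto
  then have "0 < 1 / r" "1 / r < 1 / sqrt 2"
    unfolding r_def by (auto intro!: divide_strict_left_mono)
  moreover have "1 / r < d"
    using assms unfolding r_def by (auto simp: field_simps max_def)
  moreover fix P1 P2 assume "meet P1 (cball 0 r) = meet P2 (cball 0 r)"
  ultimately show "rho P1 P2 < d"
    using rho_le[of "1 / r" 0 0 P1 P2] by fastforce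
qed

lemma in_hull_if_agrees_with_translates:
  assumes "\<And>r. \<exists>y. meet (patch_transl T y) (cball 0 r) = meet S (cball 0 r)"
  shows "S \<in> hull_X T"
  unfolding hull_X_def
proof (intro CollectI allI impI)
  fix e :: real assume "0 < e"
  then obtain r where
    r: "\<And>P1 P2 :: ('a, 'b) tile set. meet P1 (cball 0 r) = meet P2 (cball 0 r) \<Longrightarrow> rho P1 P2 < e"
    using rho_less_if_agree by blast
  then show "\<exists>y. rho S (patch_transl T y) < e"
    using assms by metis
qed

lemma patch_transl_in_hull: "patch_transl T y \<in> hull_X T"
  by (rule in_hull_if_agrees_with_translates) blast

lemma hull_agrees_with_translate:
  assumes "S \<in> hull_X T" "0 < \<eta>"
  obtains y u where "rho S (patch_transl T y) < \<eta>" "norm (u - y) < \<eta>"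
    "meet S (cball c R) = meet (patch_transl T u) (cball c R)"
proof -
  have "sqrt 2 < 2"
    by (rule real_less_lsqrt) auto
  then have "1 / 2 < 1 / sqrt 2"
    by (simp add: field_simps)
  define \<eta>' where "\<eta>' = min (\<eta> / 2) (min (1 / 2) (1 / (norm c + \<bar>R\<bar> + 1)))"
  have "0 < \<eta>'"
    using assms(2) unfolding \<eta>'_def by (auto simp: add_nonneg_pos)
  have "\<eta>' \<le> \<eta> / 2" "\<eta>' \<le> 1 / 2"
    unfolding \<eta>'_def by simp_all
  then have "\<eta>' \<le> 1 / sqrt 2"
    using \<open>1 / 2 < 1 / sqrt 2\<close> by linarith
  obtain y where y: "rho S (patch_transl T y) < \<eta>'"
    using assms(1) \<open>0 < \<eta>'\<close> unfolding hull_X_def by blast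
  then obtain e x1 x2 where e: "0 < e" "e < \<eta>'" "norm x1 \<le> e" "norm x2 \<le> e"
    and agree: "meet (patch_transl S x1) (cball 0 (1/e)) =
      meet (patch_transl (patch_transl T y) x2) (cball 0 (1/e))"
    using \<open>\<eta>' \<le> 1 / sqrt 2\<close> by (rule rho_less_imp_witness)
  have "patch_transl (patch_transl T y) x2 = patch_transl (patch_transl T (y + x2 - x1)) x1"
    by simp
  with agree have "patch_transl (meet S (cball (0 - x1) (1/e))) x1 =
      patch_transl (meet (patch_transl T (y + x2 - x1)) (cball (0 - x1) (1/e))) x1"
    by (simp only: meet_patch_transl)
  then have "meet S (cball (- x1) (1/e)) = meet (patch_transl T (y + x2 - x1)) (cball (- x1) (1/e))"
    unfolding patch_transl_eq_iff diff_0 .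
  moreover have "cball c R \<subseteq> cball (- x1) (1/e)"
  proof -
    have "e * (norm c + \<bar>R\<bar> + 1) < 1"
      using e(2) unfolding \<eta>'_def by (simp add: less_divide_eq add_nonneg_pos)
    then have "norm c + \<bar>R\<bar> + 1 < 1 / e"
      using e(1) by (simp add: less_divide_eq mult.commute)
    moreover have "dist c (- x1) \<le> norm c + 1"
      using norm_triangle_ineq[of c x1] e(2,3) unfolding \<eta>'_def by (simp add: dist_norm)
    ultimately show ?thesis
      unfolding cball_subset_cball_iff by linarith
  qed
  ultimately have "meet S (cball c R) = meet (patch_transl T (y + x2 - x1)) (cball c R)"
    by (rule meet_eq_subset)
  moreover have "norm (y + x2 - x1 - y) < \<eta>"
    using e norm_triangle_ineq4[of x2 x1] \<open>\<eta>' \<le> \<eta> / 2\<close> by simp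
  moreover have "rho S (patch_transl T y) < \<eta>"
    using y assms(2) \<open>\<eta>' \<le> \<eta> / 2\<close> by linarith
  ultimately show ?thesis
    using that by blast
qed

lemma hull_tiles_in_translate:
  assumes "S \<in> hull_X T" "t \<in> S" "t' \<in> S" "fst t \<noteq> {}" "fst t' \<noteq> {}"
  obtains u where "t \<in> patch_transl T u" "t' \<in> patch_transl T u"
proof -
  obtain p p' where "p \<in> fst t" "p' \<in> fst t'"
    using assms(4,5) by blast
  then have "t \<in> meet S (cball 0 (max (norm p) (norm p')))"
    "t' \<in> meet S (cball 0 (max (norm p) (norm p')))"
    using assms(2,3) unfolding meet_def by auto
  moreover obtain y u where "meet S (cball 0 (max (norm p) (norm p'))) =
      meet (patch_transl T u) (cball 0 (max (norm p) (norm p')))"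
    using hull_agrees_with_translate[OF assms(1) zero_less_one] by blast
  ultimately show ?thesis
    using that meet_subset by blast
qed

lemma hull_is_patch:
  assumes "is_patch T" "S \<in> hull_X T"
  shows "is_patch S"
  unfolding is_patch_def
proof (intro conjI ballI impI)
  fix t assume "t \<in> S"
  show "is_tile t"
  proof (cases "fst t = {}")
    case True
    then show ?thesis
      unfolding is_tile_def by simp
  next
    case False
    then obtain u where "t \<in> patch_transl T u"
      using hull_tiles_in_translate[OF assms(2) \<open>t \<in> S\<close> \<open>t \<in> S\<close>] by blast
    then show ?thesis
      using is_patch_patch_transl[OF assms(1)] unfolding is_patch_def by blast
  qed
next
  fix t t' assume "t \<in> S" "t' \<in> S" "t \<noteq> t'"
  show "interior (fst t) \<inter> interior (fst t') = {}"
  proof (cases "fst t = {} \<or> fst t' = {}")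
    case True
    then show ?thesis by auto
  next
    case False
    then obtain u where "t \<in> patch_transl T u" "t' \<in> patch_transl T u"
      using hull_tiles_in_translate[OF assms(2) \<open>t \<in> S\<close> \<open>t' \<in> S\<close>] by blast
    then show ?thesis
      using is_patch_patch_transl[OF assms(1)] \<open>t \<noteq> t'\<close> unfolding is_patch_def by blast
  qed
qed

lemma tiles_diam_le_hull:
  assumes "tiles_diam_le T D" "S \<in> hull_X T"
  shows "tiles_diam_le S D"
  unfolding tiles_diam_le_def
proof (intro ballI)
  fix t p q assume "t \<in> S" "p \<in> fst t" "q \<in> fst t"
  then obtain u where "t \<in> patch_transl T u"
    using hull_tiles_in_translate[OF assms(2) \<open>t \<in> S\<close> \<open>t \<in> S\<close>] by blast
  with tiles_diam_le_patch_transl[OF assms(1)] \<open>p \<in> fst t\<close> \<open>q \<in> fst t\<close> show "dist p q \<le> D"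
    unfolding tiles_diam_le_def by blast
qed

section \<open>Tilings of finite local complexity\<close>

lemma diagonal_constant_values:
  fixes g :: "nat \<Rightarrow> nat \<Rightarrow> 'b"
  assumes "\<And>m. finite (range (g m))"
  obtains P where "\<And>m. infinite {n. \<forall>i\<le>m. g i n = P i}"
proof
  define N where "N = rec_nat UNIV (\<lambda>m A. {n\<in>A. g m n = (SOME P. infinite {n\<in>A. g m n = P})})"
  define P where "P m = (SOME P. infinite {n\<in>N m. g m n = P})" for m
  have N_Suc: "N (Suc m) = {n\<in>N m. g m n = P m}" for m
    unfolding N_def P_def by simp
  have infinite_N: "infinite (N m)" for m
  proof (induction m)
    case 0
    then show ?case by (simp add: N_def)
  next
    case (Suc m)
    have "finite (g m ` N m)"
      using assms[of m] by (rule finite_subset[rotated]) auto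
    then obtain Q where "infinite (g m -` {Q} \<inter> N m)"
      using inf_img_fin_dom'[OF _ Suc.IH] by blast
    then have "infinite {n\<in>N m. g m n = Q}"
      by (simp add: Int_commute vimage_def Collect_conj_eq)
    then have "infinite {n\<in>N m. g m n = P m}"
      unfolding P_def by (rule someI)
    then show ?case by (simp add: N_Suc)
  qed
  fix m
  have "N (Suc m) \<subseteq> {n. \<forall>i\<le>m. g i n = P i}"
  proof (induction m)
    case 0
    then show ?case by (auto simp: N_Suc)
  next
    case (Suc m)
    then show ?case by (auto simp: N_Suc[of "Suc m"] le_Suc_eq)
  qed
  then show "infinite {n. \<forall>i\<le>m. g i n = P i}"
    using infinite_N infinite_super by blast
qed

locale flc_tiling =
  fixes T :: "('a::euclidean_space, 'l) tile set"
  assumes tiling: "is_tiling T" and flc: "FLC T"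
begin

lemma patch: "is_patch T"
  using tiling unfolding is_tiling_def by simp

lemma flc_cball: "\<exists>F. finite F \<and> (\<forall>x. \<exists>Q\<in>F. \<exists>y. meet T (cball x r) = patch_transl Q y)"
proof -
  have "\<exists>F. finite F \<and>
      (\<forall>x. \<exists>Q\<in>F. \<exists>y. meet T ((\<lambda>z. z + x) ` cball 0 r) = patch_transl Q y)"
    using flc compact_cball unfolding FLC_def by blast
  then show ?thesis
    by (simp only: image_add_right_cball)
qed

lemma prototiles_exist:
  "\<exists>PI. finite PI \<and> (\<forall>s\<in>PI. is_tile s \<and> fst s \<noteq> {}) \<and>
     (\<forall>t\<in>T. fst t \<noteq> {} \<longrightarrow> (\<exists>s\<in>PI. \<exists>y. t = tile_transl s y))"
proof -
  obtain F where F: "finite F" "\<And>x. \<exists>Q\<in>F. \<exists>y. meet T (cball x 0) = patch_transl Q y"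
    using flc_cball[of 0] by blast
  define PI where "PI = {s. {s} \<in> F \<and> is_tile s \<and> fst s \<noteq> {}}"
  have "finite PI"
  proof (rule finite_subset)
    show "PI \<subseteq> (\<lambda>s. {s}) -` F"
      unfolding PI_def by auto
    show "finite ((\<lambda>s. {s}) -` F)"
      using F(1) by (rule finite_vimageI) (simp add: inj_on_def)
  qed
  moreover have "\<exists>s\<in>PI. \<exists>y. t = tile_transl s y" if "t \<in> T" "fst t \<noteq> {}" for t
  proof -
    have "is_tile t"
      using patch \<open>t \<in> T\<close> unfolding is_patch_def by blast
    with \<open>fst t \<noteq> {}\<close> obtain p where p: "p \<in> interior (fst t)"
      using tile_interior_nonempty by blast
    have "meet T {p} = {t}"
      by (rule meet_interior_point[OF patch \<open>t \<in> T\<close> p])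
    obtain Q y where "Q \<in> F" and Q: "meet T (cball p 0) = patch_transl Q y"
      using F(2) by blast
    have "patch_transl Q y = meet T {p}"
      using Q by simp
    also have "\<dots> = {t}"
      by fact
    finally have "Q = patch_transl {t} (- y)"
      by (metis add.right_inverse patch_transl_0 patch_transl_add)
    then have "Q = {tile_transl t (- y)}"
      by (simp add: patch_transl_def)
    then have "tile_transl t (- y) \<in> PI"
      using \<open>Q \<in> F\<close> \<open>is_tile t\<close> \<open>fst t \<noteq> {}\<close> unfolding PI_def
      by (simp add: is_tile_tile_transl fst_tile_transl)
    moreover have "t = tile_transl (tile_transl t (- y)) y"
      by (simp add: tile_transl_add)
    ultimately show ?thesis
      by metis
  qed
  moreover have "\<forall>s\<in>PI. is_tile s \<and> fst s \<noteq> {}"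
    unfolding PI_def by blast
  ultimately show ?thesis
    by (intro exI[of _ PI]) blast
qed

definition prototiles :: "('a, 'l) tile set" where
  "prototiles = (SOME PI. finite PI \<and> (\<forall>s\<in>PI. is_tile s \<and> fst s \<noteq> {}) \<and>
     (\<forall>t\<in>T. fst t \<noteq> {} \<longrightarrow> (\<exists>s\<in>PI. \<exists>y. t = tile_transl s y)))"

lemma prototiles:
  "finite prototiles" "\<And>s. s \<in> prototiles \<Longrightarrow> is_tile s \<and> fst s \<noteq> {}"
  "\<And>t. t \<in> T \<Longrightarrow> fst t \<noteq> {} \<Longrightarrow> \<exists>s\<in>prototiles. \<exists>y. t = tile_transl s y"
  using someI_ex[OF prototiles_exist] unfolding prototiles_def[symmetric] by blast+

lemma prototiles_bounded:
  obtains B where "\<And>s p. s \<in> prototiles \<Longrightarrow> p \<in> fst s \<Longrightarrow> norm p \<le> B"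
proof -
  have "bounded (fst s)" if "s \<in> prototiles" for s
    using prototiles(2)[OF that] by (simp add: is_tile_def compact_imp_bounded)
  then have "bounded (\<Union>s\<in>prototiles. fst s)"
    using prototiles(1) by blast
  then show ?thesis
    using that unfolding bounded_iff by blast
qed

lemma tiles_diam_bounded: obtains D where "tiles_diam_le T D"
proof -
  obtain B where B: "\<And>s p. s \<in> prototiles \<Longrightarrow> p \<in> fst s \<Longrightarrow> norm p \<le> B"
    using prototiles_bounded by blast
  have "dist p q \<le> 2 * B" if t: "t \<in> T" and pq: "p \<in> fst t" "q \<in> fst t" for t p q
  proof -
    obtain s y where "s \<in> prototiles" "t = tile_transl s y"
      using prototiles(3) t pq by blast
    moreover from this have "p - y \<in> fst s" "q - y \<in> fst s"
      using pq by (auto simp: fst_tile_transl)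
    ultimately have "norm (p - y) \<le> B" "norm (q - y) \<le> B"
      using B by blast+
    then show ?thesis
      using norm_triangle_ineq4[of "p - y" "q - y"] by (simp add: dist_norm)
  qed
  then have "tiles_diam_le T (2 * B)"
    unfolding tiles_diam_le_def by blast
  then show ?thesis
    by (rule that)
qed

lemma prototile_near:
  obtains B where "\<And>z. \<exists>s\<in>prototiles. \<exists>y. tile_transl s y \<in> T \<and> norm (z - y) \<le> B"
proof -
  obtain B where B: "\<And>s p. s \<in> prototiles \<Longrightarrow> p \<in> fst s \<Longrightarrow> norm p \<le> B"
    using prototiles_bounded by blast
  have "\<exists>s\<in>prototiles. \<exists>y. tile_transl s y \<in> T \<and> norm (z - y) \<le> B + 1" for z
  proof -
    have "z \<in> closure (\<Union>t\<in>T. fst t)"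
      using tiling unfolding is_tiling_def patch_supp_def by simp
    then obtain q where "q \<in> (\<Union>t\<in>T. fst t)" "dist q z < 1"
      unfolding closure_approachable using zero_less_one by blast
    then obtain t where "t \<in> T" "q \<in> fst t" "dist q z < 1"
      by blast
    moreover obtain s y where s: "s \<in> prototiles" "t = tile_transl s y"
      using prototiles(3) \<open>t \<in> T\<close> \<open>q \<in> fst t\<close> by blast
    moreover have "q - y \<in> fst s"
      using \<open>q \<in> fst t\<close> s(2) by (auto simp: fst_tile_transl)
    then have "norm (q - y) \<le> B"
      using B s(1) by blast
    moreover have "norm (z - y) \<le> norm (z - q) + norm (q - y)"
      using norm_triangle_ineq[of "z - q" "q - y"] by simp
    moreover have "norm (z - q) < 1"
      using \<open>dist q z < 1\<close> by (simp add: dist_norm norm_minus_commute)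
    ultimately have "tile_transl s y \<in> T" "norm (z - y) \<le> B + 1"
      by auto
    then show ?thesis
      using s(1) by blast
  qed
  then show ?thesis
    by (rule that)
qed

definition anchored :: "'a \<Rightarrow> bool" where
  "anchored y \<longleftrightarrow> (\<exists>s\<in>prototiles. s \<in> patch_transl T y)"

lemma recenter_agreement:
  obtains B where "\<And>u v c R.
    meet (patch_transl T u) (cball c (R + B)) = meet (patch_transl T v) (cball c (R + B))
      \<Longrightarrow> \<exists>y. anchored y \<and>
        meet (patch_transl T y) (cball 0 R) = meet (patch_transl T (y + (v - u))) (cball 0 R)"
proof -
  obtain B where B: "\<And>z. \<exists>s\<in>prototiles. \<exists>y. tile_transl s y \<in> T \<and> norm (z - y) \<le> B"
    using prototile_near by blast
  have "\<exists>y. anchored y \<and>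
      meet (patch_transl T y) (cball 0 R) = meet (patch_transl T (y + (v - u))) (cball 0 R)"
    if agree:
      "meet (patch_transl T u) (cball c (R + B)) = meet (patch_transl T v) (cball c (R + B))"
    for u v c R
  proof -
    obtain s y where s: "s \<in> prototiles" "tile_transl s (- y) \<in> T" and near: "norm (c - u + y) \<le> B"
      using B[of "c - u"] by (metis diff_minus_eq_add minus_minus)
    have "anchored y"
      unfolding anchored_def mem_patch_transl using s by blast
    have "meet (patch_transl (patch_transl T y) (u - y)) (cball c (R + B)) =
        meet (patch_transl (patch_transl T (y + (v - u))) (u - y)) (cball c (R + B))"
      using agree by (simp add: algebra_simps)
    then have "meet (patch_transl T y) (cball (c - (u - y)) (R + B)) =
        meet (patch_transl T (y + (v - u))) (cball (c - (u - y)) (R + B))"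
      unfolding meet_patch_transl_eq_iff .
    moreover have "cball 0 R \<subseteq> cball (c - (u - y)) (R + B)"
    proof
      fix z :: 'a assume "z \<in> cball 0 R"
      then show "z \<in> cball (c - (u - y)) (R + B)"
        using near norm_triangle_ineq4[of "c - u + y" z] by (simp add: dist_norm algebra_simps)
    qed
    ultimately show ?thesis
      using \<open>anchored y\<close> meet_eq_subset by blast
  qed
  then show ?thesis
    by (rule that)
qed

lemma finite_pattern_offsets:
  assumes "is_tile s" "fst s \<inter> cball 0 r \<noteq> {}"
  shows "finite
    {t. \<exists>y. s \<in> patch_transl T y \<and> meet (patch_transl T y) (cball 0 r) = patch_transl Q t}"
    (is "finite ?G")
proof (rule finite_offsets_of_pinned_tile[OF assms(1)])
  show "fst s \<noteq> {}"
    using assms(2) by blast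
  fix t t' assume "t \<in> ?G" "t' \<in> ?G"
  obtain y where "s \<in> patch_transl T y" "meet (patch_transl T y) (cball 0 r) = patch_transl Q t"
    using \<open>t \<in> ?G\<close> by blast
  moreover obtain y' where "s \<in> meet (patch_transl T y') (cball 0 r)"
    "meet (patch_transl T y') (cball 0 r) = patch_transl Q t'"
    using \<open>t' \<in> ?G\<close> assms(2) unfolding meet_def by blast
  ultimately show "\<exists>P. is_patch P \<and> s \<in> P \<and> tile_transl s (t - t') \<in> meet P (cball 0 r)"
    using tile_transl_in_same_pattern is_patch_patch_transl[OF patch] by blast
qed

text \<open>Finite local complexity leaves finitely many patterns up to translation, and pinning one
  tile leaves finitely many translations of each.\<close>

lemma finite_patches_around_tile:
  assumes "is_tile s" "fst s \<inter> cball 0 r \<noteq> {}"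
  shows "finite {meet (patch_transl T y) (cball 0 r) | y. s \<in> patch_transl T y}"
proof -
  obtain F where F: "finite F" "\<And>x. \<exists>Q\<in>F. \<exists>t. meet T (cball x r) = patch_transl Q t"
    using flc_cball by blast
  define G where
    "G Q = {t. \<exists>y. s \<in> patch_transl T y \<and> meet (patch_transl T y) (cball 0 r) = patch_transl Q t}"
    for Q
  have "{meet (patch_transl T y) (cball 0 r) | y. s \<in> patch_transl T y}
      \<subseteq> (\<Union>Q\<in>F. patch_transl Q ` G Q)"
  proof
    fix P assume "P \<in> {meet (patch_transl T y) (cball 0 r) | y. s \<in> patch_transl T y}"
    then obtain y where y: "s \<in> patch_transl T y" "P = meet (patch_transl T y) (cball 0 r)"
      by blast
    obtain Q t where "Q \<in> F" and Q: "meet T (cball (- y) r) = patch_transl Q t"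
      using F(2) by blast
    have "meet (patch_transl T y) (cball 0 r) = patch_transl (meet T (cball (0 - y) r)) y"
      by (rule meet_patch_transl)
    also have "\<dots> = patch_transl Q (t + y)"
      using Q by simp
    finally have P: "meet (patch_transl T y) (cball 0 r) = patch_transl Q (t + y)" .
    then have "t + y \<in> G Q"
      using y(1) unfolding G_def by blast
    then have "meet (patch_transl T y) (cball 0 r) \<in> patch_transl Q ` G Q"
      unfolding P by (rule imageI)
    then show "P \<in> (\<Union>Q\<in>F. patch_transl Q ` G Q)"
      using \<open>Q \<in> F\<close> y(2) by blast
  qed
  moreover have "finite (\<Union>Q\<in>F. patch_transl Q ` G Q)"
    using F(1) finite_pattern_offsets[OF assms] unfolding G_def by blast
  ultimately show ?thesis
    by (rule finite_subset)
qed

lemma finite_anchored_patches: "finite {meet (patch_transl T y) (cball 0 r) | y. anchored y}"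
proof -
  have "finite {meet (patch_transl T y) (cball 0 r) | y. s \<in> patch_transl T y}"
    if s: "s \<in> prototiles" for s
  proof -
    obtain p where "p \<in> fst s"
      using prototiles(2)[OF s] by blast
    define r' where "r' = max r (norm p)"
    have sub: "cball 0 r \<subseteq> cball 0 r'"
      unfolding r'_def by (rule subset_cball) simp
    have "finite {meet (patch_transl T y) (cball 0 r') | y. s \<in> patch_transl T y}"
      using \<open>p \<in> fst s\<close> prototiles(2)[OF s]
      by (intro finite_patches_around_tile) (auto simp: r'_def)
    then have "finite ((\<lambda>P. meet P (cball 0 r)) `
        {meet (patch_transl T y) (cball 0 r') | y. s \<in> patch_transl T y})"
      by (rule finite_imageI)
    moreover have "(\<lambda>P. meet P (cball 0 r)) `
        {meet (patch_transl T y) (cball 0 r') | y. s \<in> patch_transl T y}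
        = {meet (patch_transl T y) (cball 0 r) | y. s \<in> patch_transl T y}"
      by (auto simp: meet_meet[OF sub] image_iff) (use meet_meet[OF sub] in blast)
    ultimately show ?thesis
      by simp
  qed
  moreover have "{meet (patch_transl T y) (cball 0 r) | y. anchored y} =
      (\<Union>s\<in>prototiles. {meet (patch_transl T y) (cball 0 r) | y. s \<in> patch_transl T y})"
    unfolding anchored_def by blast
  ultimately show ?thesis
    using prototiles(1) by simp
qed

text \<open>Sequential compactness of the hull, by a diagonal argument over the finitely many
  anchored patterns of each radius.\<close>

lemma anchored_sequence_cluster:
  fixes y :: "nat \<Rightarrow> 'a"
  assumes "\<And>n. anchored (y n)"
  obtains S where "S \<in> hull_X T"
    "\<And>r k. \<exists>n\<ge>k. meet (patch_transl T (y n)) (cball 0 r) = meet S (cball 0 r)"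
proof -
  define g where "g m n = meet (patch_transl T (y n)) (cball 0 (real m))" for m n :: nat
  have finite_range: "finite (range (g m))" for m
    using finite_anchored_patches[of "real m"]
    by (rule finite_subset[rotated]) (auto simp: g_def assms)
  obtain P where "\<And>m. infinite {n. \<forall>i\<le>m. g i n = P i}"
    using diagonal_constant_values[of g, OF finite_range] by blast
  then have witness: "\<exists>n\<ge>k. \<forall>i\<le>m. g i n = P i" for m k
    unfolding infinite_nat_iff_unbounded_le by blast
  have P_meet: "P m = meet (P m') (cball 0 (real m))" if "m \<le> m'" for m m'
  proof -
    obtain n where "\<forall>i\<le>m'. g i n = P i"
      using witness by blast
    then have "P m = g m n" "P m' = g m' n"
      using that by auto
    moreover have sub: "cball 0 (real m) \<subseteq> cball 0 (real m')"
      using that by (simp add: subset_cball)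
    ultimately show ?thesis
      unfolding g_def by (simp add: meet_meet[OF sub])
  qed
  define S where "S = (\<Union>m. P m)"
  have S_meet: "meet S (cball 0 (real m)) = P m" for m
    unfolding S_def using P_meet by (rule meet_Union_nested)
  have agree: "\<exists>n\<ge>k. meet (patch_transl T (y n)) (cball 0 r) = meet S (cball 0 r)" for r k
  proof -
    obtain m :: nat where "r \<le> real m"
      using real_arch_simple by blast
    obtain n where "n \<ge> k" and "g m n = P m"
      using witness[of k m] by auto
    from \<open>g m n = P m\<close>
    have "meet (patch_transl T (y n)) (cball 0 (real m)) = meet S (cball 0 (real m))"
      unfolding g_def S_meet .
    then show ?thesis
      using meet_eq_subset subset_cball[OF \<open>r \<le> real m\<close>] \<open>n \<ge> k\<close> by blast
  qed
  then have "S \<in> hull_X T"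
    by (metis in_hull_if_agrees_with_translates)
  with agree show ?thesis
    using that by blast
qed

end

section \<open>Continuous eigenfunctions\<close>

locale eigen_tiling = flc_tiling T for T :: "('a::euclidean_space, 'l) tile set" +
  fixes f :: "('a, 'l) tile set \<Rightarrow> complex" and a :: 'a
  assumes eigen: "cont_eigenfunction T f a"
begin

definition phase :: "'a \<Rightarrow> complex" where
  "phase v = exp (2 * pi * \<i> * complex_of_real ((- v) \<bullet> a))"

lemma norm_phase [simp]: "norm (phase v) = 1"
  unfolding phase_def by simp

lemma phase_add: "phase (u + v) = phase u * phase v"
  unfolding phase_def exp_add[symmetric] by (simp add: inner_add_left algebra_simps)

lemma phase_near_1:
  assumes "0 < e"
  obtains \<delta> where "0 < \<delta>" "\<And>v. norm v < \<delta> \<Longrightarrow> norm (1 - phase v) < e"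
proof -
  have "isCont phase 0"
    unfolding phase_def by (intro continuous_intros)
  moreover have "phase 0 = 1"
    unfolding phase_def by simp
  ultimately obtain \<delta> where "0 < \<delta>" "\<And>v. dist v 0 < \<delta> \<Longrightarrow> dist (phase v) 1 < e"
    using assms unfolding continuous_at_eps_delta by metis
  then show ?thesis
    using that by (simp add: dist_norm norm_minus_commute)
qed

lemma norm_f: "S \<in> hull_X T \<Longrightarrow> norm (f S) = 1"
  using eigen unfolding cont_eigenfunction_def by blast

lemma f_continuous:
  "S \<in> hull_X T \<Longrightarrow> 0 < e \<Longrightarrow> \<exists>d>0. \<forall>S'\<in>hull_X T. rho S' S < d \<longrightarrow> dist (f S') (f S) < e"
  using eigen unfolding cont_eigenfunction_def by blast

lemma f_patch_transl: "S \<in> hull_X T \<Longrightarrow> f (patch_transl S v) = phase v * f S"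
  using eigen unfolding cont_eigenfunction_def phase_def by (metis minus_minus)

lemma norm_f_transl_diff:
  assumes "S \<in> hull_X T"
  shows "norm (f (patch_transl S u) - f (patch_transl S v)) = norm (1 - phase (v - u))"
proof -
  have "phase v = phase u * phase (v - u)"
    by (metis add.commute diff_add_cancel phase_add)
  then have "f (patch_transl S u) - f (patch_transl S v) = phase u * f S * (1 - phase (v - u))"
    using assms by (simp add: f_patch_transl algebra_simps)
  then show ?thesis
    using assms by (simp add: norm_mult norm_f)
qed

lemma T_in_hull: "T \<in> hull_X T"
  using patch_transl_in_hull[of T 0] by simp

lemma f_close_if_agree:
  assumes "S \<in> hull_X T" "0 < e"
  obtains r where "\<And>S'. S' \<in> hull_X T \<Longrightarrow> meet S' (cball 0 r) = meet S (cball 0 r) \<Longrightarrow>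
    dist (f S') (f S) < e"
proof -
  obtain d where "0 < d" and d: "\<forall>S'\<in>hull_X T. rho S' S < d \<longrightarrow> dist (f S') (f S) < e"
    using f_continuous[OF assms] by blast
  obtain r where
    "\<And>P1 P2 :: ('a, 'l) tile set. meet P1 (cball 0 r) = meet P2 (cball 0 r) \<Longrightarrow> rho P1 P2 < d"
    using rho_less_if_agree[OF \<open>0 < d\<close>] by blast
  with d show ?thesis
    using that by blast
qed

text \<open>Here compactness of the hull enters: the translates \<open>T + y n\<close> cluster at some \<open>S\<close>, and
  near \<open>S\<close> both \<open>f (T + y n)\<close> and \<open>f (T + (y n + w n))\<close> are close to \<open>f S\<close>.\<close>

lemma phase_near_1_along_anchored_sequence:
  fixes y w :: "nat \<Rightarrow> 'a"
  assumes "0 < e" "\<And>n. anchored (y n)"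
    and agree: "\<And>n. meet (patch_transl T (y n)) (cball 0 (real n)) =
      meet (patch_transl T (y n + w n)) (cball 0 (real n))"
  shows "\<exists>n. norm (1 - phase (w n)) < e"
proof -
  obtain S where "S \<in> hull_X T"
    and cluster: "\<And>r k. \<exists>n\<ge>k. meet (patch_transl T (y n)) (cball 0 r) = meet S (cball 0 r)"
    using anchored_sequence_cluster[where y = y, OF assms(2)] by blast
  obtain r where r: "\<And>S'. S' \<in> hull_X T \<Longrightarrow> meet S' (cball 0 r) = meet S (cball 0 r) \<Longrightarrow>
      dist (f S') (f S) < e / 2"
    using f_close_if_agree[OF \<open>S \<in> hull_X T\<close>, of "e / 2"] assms(1) by auto
  obtain m :: nat where "r \<le> real m"
    using real_arch_simple by blast
  obtain n where "m \<le> n"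
    and near: "meet (patch_transl T (y n)) (cball 0 r) = meet S (cball 0 r)"
    using cluster by blast
  with \<open>r \<le> real m\<close> have "r \<le> real n"
    by linarith
  then have "meet (patch_transl T (y n + w n)) (cball 0 r) = meet S (cball 0 r)"
    using meet_eq_subset[OF agree[symmetric] subset_cball] near by metis
  then have "dist (f (patch_transl T (y n + w n))) (f S) < e / 2"
    using r patch_transl_in_hull by blast
  moreover have "dist (f (patch_transl T (y n))) (f S) < e / 2"
    using near r patch_transl_in_hull by blast
  ultimately have "norm (f (patch_transl T (y n)) - f (patch_transl T (y n + w n))) < e"
    using dist_triangle_less_add by (fastforce simp: dist_norm)
  then show ?thesis
    using norm_f_transl_diff[OF T_in_hull, of "y n" "y n + w n"] by auto
qed

lemma orbit_agreement_phase_near_1: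
  assumes "0 < e"
  obtains R where "\<And>u v c. meet (patch_transl T u) (cball c R) = meet (patch_transl T v) (cball c R)
    \<Longrightarrow> norm (1 - phase (v - u)) < e"
proof -
  obtain B where recenter: "\<And>u v c R.
      meet (patch_transl T u) (cball c (R + B)) = meet (patch_transl T v) (cball c (R + B)) \<Longrightarrow>
      \<exists>y. anchored y \<and> meet (patch_transl T y) (cball 0 R) = meet (patch_transl T (y + (v - u))) (cball 0 R)"
    using recenter_agreement by metis
  have "\<exists>R. \<forall>u v c. meet (patch_transl T u) (cball c R) = meet (patch_transl T v) (cball c R)
      \<longrightarrow> norm (1 - phase (v - u)) < e"
  proof (rule ccontr)
    assume no_radius: "\<not> ?thesis"
    have "\<forall>n::nat. \<exists>y w. anchored y \<and>
        meet (patch_transl T y) (cball 0 (real n)) = meet (patch_transl T (y + w)) (cball 0 (real n)) \<and>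
        \<not> norm (1 - phase w) < e"
    proof
      fix n :: nat
      obtain u v c where
        "meet (patch_transl T u) (cball c (real n + B)) = meet (patch_transl T v) (cball c (real n + B))"
        and far: "\<not> norm (1 - phase (v - u)) < e"
        using no_radius by blast
      with recenter show "\<exists>y w. anchored y \<and>
          meet (patch_transl T y) (cball 0 (real n)) = meet (patch_transl T (y + w)) (cball 0 (real n)) \<and>
          \<not> norm (1 - phase w) < e"
        by blast
    qed
    then obtain y w where "\<And>n. anchored (y n)"
      "\<And>n. meet (patch_transl T (y n)) (cball 0 (real n)) =
        meet (patch_transl T (y n + w n)) (cball 0 (real n))"
      and "\<And>n. \<not> norm (1 - phase (w n)) < e"
      unfolding choice_iff by blast
    then show False
      using phase_near_1_along_anchored_sequence[OF assms] by blast
  qed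
  then show ?thesis
    using that by blast
qed

lemma hull_approx_by_translate:
  assumes "S \<in> hull_X T" "0 < e"
  obtains u where "meet S (cball c R) = meet (patch_transl T u) (cball c R)"
    "norm (f S - f (patch_transl T u)) < e"
proof -
  obtain d where "0 < d" and d: "\<forall>S'\<in>hull_X T. rho S' S < d \<longrightarrow> dist (f S') (f S) < e / 2"
    using f_continuous[OF assms(1)] assms(2) by (metis half_gt_zero)
  obtain \<delta> where "0 < \<delta>" and \<delta>: "\<And>v. norm v < \<delta> \<Longrightarrow> norm (1 - phase v) < e / 2"
    using phase_near_1[of "e / 2"] assms(2) by auto
  have "0 < min d \<delta>"
    using \<open>0 < d\<close> \<open>0 < \<delta>\<close> by simp
  then obtain y u where "rho S (patch_transl T y) < min d \<delta>" "norm (u - y) < min d \<delta>"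
    and agree: "meet S (cball c R) = meet (patch_transl T u) (cball c R)"
    using hull_agrees_with_translate[OF assms(1), where c = c and R = R] by blast
  then have "rho (patch_transl T y) S < d"
    by (simp add: rho_sym)
  then have "dist (f (patch_transl T y)) (f S) < e / 2"
    using d patch_transl_in_hull by blast
  then have "norm (f S - f (patch_transl T y)) < e / 2"
    by (simp add: dist_norm norm_minus_commute)
  moreover have "norm (f (patch_transl T y) - f (patch_transl T u)) < e / 2"
    using \<delta> \<open>norm (u - y) < min d \<delta>\<close> norm_f_transl_diff[OF T_in_hull, of y u] by simp
  ultimately have "norm (f S - f (patch_transl T u)) < e / 2 + e / 2"
    by (rule norm_diff_triangle_less)
  with agree show ?thesis
    using that by simp
qed

lemma hull_meet_agreement_f_close:
  assumes "0 < e"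
  obtains R where "\<And>S1 S2 x. S1 \<in> hull_X T \<Longrightarrow> S2 \<in> hull_X T \<Longrightarrow>
    meet S1 (cball x R) = meet S2 (cball x R) \<Longrightarrow> norm (f S1 - f S2) < e"
proof -
  obtain R where R: "\<And>u v c. meet (patch_transl T u) (cball c R) = meet (patch_transl T v) (cball c R)
      \<Longrightarrow> norm (1 - phase (v - u)) < e / 3"
    using orbit_agreement_phase_near_1[of "e / 3"] assms by auto
  have "norm (f S1 - f S2) < e"
    if S: "S1 \<in> hull_X T" "S2 \<in> hull_X T" and agree: "meet S1 (cball x R) = meet S2 (cball x R)"
    for S1 S2 x
  proof -
    obtain u1 where u1: "meet S1 (cball x R) = meet (patch_transl T u1) (cball x R)"
      "norm (f S1 - f (patch_transl T u1)) < e / 3"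
      using hull_approx_by_translate[OF S(1)] assms by (metis divide_pos_pos zero_less_numeral)
    obtain u2 where u2: "meet S2 (cball x R) = meet (patch_transl T u2) (cball x R)"
      "norm (f S2 - f (patch_transl T u2)) < e / 3"
      using hull_approx_by_translate[OF S(2)] assms by (metis divide_pos_pos zero_less_numeral)
    have "meet (patch_transl T u1) (cball x R) = meet (patch_transl T u2) (cball x R)"
      using agree u1(1) u2(1) by simp
    then have "norm (f (patch_transl T u1) - f (patch_transl T u2)) < e / 3"
      using R norm_f_transl_diff[OF T_in_hull] by simp
    with u1(2) have "norm (f S1 - f (patch_transl T u2)) < e / 3 + e / 3"
      by (rule norm_diff_triangle_less)
    moreover have "norm (f (patch_transl T u2) - f S2) < e / 3"
      using u2(2) by (simp add: norm_minus_commute)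
    ultimately have "norm (f S1 - f S2) < e / 3 + e / 3 + e / 3"
      by (rule norm_diff_triangle_less)
    then show ?thesis
      by simp
  qed
  then show ?thesis
    using that by blast
qed

lemma hull_agreement_f_close:
  assumes "0 < e"
  obtains R where "0 < R" "\<And>S1 S2 x. S1 \<in> hull_X T \<Longrightarrow> S2 \<in> hull_X T \<Longrightarrow>
    inside_nonempty S1 (cball x R) = inside_nonempty S2 (cball x R) \<Longrightarrow> norm (f S1 - f S2) < e"
proof -
  obtain R\<^sub>0 where R\<^sub>0: "\<And>S1 S2 x. S1 \<in> hull_X T \<Longrightarrow> S2 \<in> hull_X T \<Longrightarrow>
      meet S1 (cball x R\<^sub>0) = meet S2 (cball x R\<^sub>0) \<Longrightarrow> norm (f S1 - f S2) < e"
    using hull_meet_agreement_f_close[OF assms] by blast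
  obtain D where D: "tiles_diam_le T D"
    using tiles_diam_bounded by blast
  define R where "R = max 1 (R\<^sub>0 + D)"
  have "norm (f S1 - f S2) < e"
    if S: "S1 \<in> hull_X T" "S2 \<in> hull_X T"
      and agree: "inside_nonempty S1 (cball x R) = inside_nonempty S2 (cball x R)"
    for S1 S2 x
  proof -
    have "inside_nonempty S1 (cball x (R\<^sub>0 + D)) = inside_nonempty S2 (cball x (R\<^sub>0 + D))"
      using agree by (rule inside_nonempty_eq_subset) (simp add: R_def subset_cball)
    then have "meet S1 (cball x R\<^sub>0) = meet S2 (cball x R\<^sub>0)"
      by (rule meet_eq_if_inside_nonempty_eq[OF tiles_diam_le_hull[OF D S(1)]
            tiles_diam_le_hull[OF D S(2)]])
    then show ?thesis
      using R\<^sub>0 S by blast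
  qed
  moreover have "0 < R"
    unfolding R_def by simp
  ultimately show ?thesis
    using that by blast
qed

lemma A_patch_diameter_less:
  assumes "0 < e"
  obtains R\<^sub>0 where "0 < R\<^sub>0"
    "\<And>R P x. R\<^sub>0 \<le> R \<Longrightarrow> cball x R \<subseteq> patch_supp P \<Longrightarrow> diameter (f ` A_patch T P) < e"
proof -
  obtain R\<^sub>0 where "0 < R\<^sub>0" and R\<^sub>0: "\<And>S1 S2 x. S1 \<in> hull_X T \<Longrightarrow> S2 \<in> hull_X T \<Longrightarrow>
      inside_nonempty S1 (cball x R\<^sub>0) = inside_nonempty S2 (cball x R\<^sub>0) \<Longrightarrow>
      norm (f S1 - f S2) < e / 2"
    using hull_agreement_f_close[of "e / 2"] assms by auto
  have "diameter (f ` A_patch T P) < e" if "R\<^sub>0 \<le> R" "cball x R \<subseteq> patch_supp P" for R P x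
  proof -
    have "norm (f S1 - f S2) \<le> e / 2" if "S1 \<in> A_patch T P" "S2 \<in> A_patch T P" for S1 S2
    proof -
      have "S1 \<in> hull_X T" "S2 \<in> hull_X T" "P \<subseteq> S1" "P \<subseteq> S2"
        using that unfolding A_patch_def by auto
      then have "inside_nonempty S1 (cball x R) = inside_nonempty S2 (cball x R)"
        using inside_nonempty_subpatch[OF hull_is_patch[OF patch]] \<open>cball x R \<subseteq> patch_supp P\<close>
        by metis
      then have "inside_nonempty S1 (cball x R\<^sub>0) = inside_nonempty S2 (cball x R\<^sub>0)"
        by (rule inside_nonempty_eq_subset) (simp add: subset_cball \<open>R\<^sub>0 \<le> R\<close>)
      then show ?thesis
        using R\<^sub>0 \<open>S1 \<in> hull_X T\<close> \<open>S2 \<in> hull_X T\<close> by fastforce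
    qed
    then have "diameter (f ` A_patch T P) \<le> e / 2"
      using assms by (intro diameter_le) auto
    then show ?thesis
      using assms by simp
  qed
  with \<open>0 < R\<^sub>0\<close> show ?thesis
    using that by blast
qed

end

theorem lemma3p4:
  fixes \<T> :: "('a::euclidean_space, 'l) tile set"
    and f :: "('a, 'l) tile set \<Rightarrow> complex" and a :: 'a
  assumes "is_tiling \<T>" and "FLC \<T>" and "cont_eigenfunction \<T> f a"
  shows "(\<forall>e>0. \<exists>R>0. \<forall>S1\<in>hull_X \<T>. \<forall>S2\<in>hull_X \<T>. \<forall>x.
            inside S1 (cball x R) = inside S2 (cball x R) \<longrightarrow> norm (f S1 - f S2) < e)
       \<and> (\<forall>e>0. \<exists>R0>0. \<forall>R\<ge>R0. \<forall>P. is_patch P \<and> (\<exists>x. cball x R \<subseteq> patch_supp P)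
            \<longrightarrow> diameter (f ` A_patch \<T> P) < e)"
proof -
  interpret eigen_tiling \<T> f a
    using assms by unfold_locales
  show ?thesis
  proof (intro conjI allI impI)
    fix e :: real assume "0 < e"
    obtain R where "0 < R" "\<And>S1 S2 x. S1 \<in> hull_X \<T> \<Longrightarrow> S2 \<in> hull_X \<T> \<Longrightarrow>
        inside_nonempty S1 (cball x R) = inside_nonempty S2 (cball x R) \<Longrightarrow> norm (f S1 - f S2) < e"
      using hull_agreement_f_close[OF \<open>0 < e\<close>] by blast
    then show "\<exists>R>0. \<forall>S1\<in>hull_X \<T>. \<forall>S2\<in>hull_X \<T>. \<forall>x.
        inside S1 (cball x R) = inside S2 (cball x R) \<longrightarrow> norm (f S1 - f S2) < e"
      using inside_nonempty_eq_if_inside_eq by blast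
  next
    fix e :: real assume "0 < e"
    obtain R\<^sub>0 where "0 < R\<^sub>0"
      "\<And>R P x. R\<^sub>0 \<le> R \<Longrightarrow> cball x R \<subseteq> patch_supp P \<Longrightarrow> diameter (f ` A_patch \<T> P) < e"
      using A_patch_diameter_less[OF \<open>0 < e\<close>] by blast
    then show "\<exists>R0>0. \<forall>R\<ge>R0. \<forall>P. is_patch P \<and> (\<exists>x. cball x R \<subseteq> patch_supp P)
        \<longrightarrow> diameter (f ` A_patch \<T> P) < e"
      by blast
  qed
qed

end
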